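(* Let $Y$ be a random variable whose moment generating function $E[e^{tY}]$ exists for $|t|<r_0$ for some $r_0>0$. Let $(Y_j)_{j\ge1}$ be mutually independent copies of $Y$, $S_0=0$, $S_k=Y_1+\cdots+Y_k$ for $k\ge1$. Let $r$ be a positive integer and define $\phi_{n,r}^Y(x,y)$ by $$\Big(1+y\big(E[e^{Yt}]-1\big)\Big)^{x}e^{rt}=\sum_{n=0}^{\infty}\phi_{n,r}^Y(x,y)\frac{t^n}{n!}.$$ Then for all integers $m,n\ge0$, $$\phi_{m+n,r}^Y(x,y)=\sum_{i=0}^{n}\sum_{k=0}^{m}\binom{n}{i}\phi_{i,r}^Y(x-k,y)\frac{(x)_k y^k}{k!}\sum_{j=k}^{m}\sum_{l_1+\cdots+l_k=j}\binom{m}{j}\binom{j}{l_1,\dots,l_k}r^{m-j}E\Big[S_k^{n-i}\prod_{p=1}^{k}Y_p^{l_p}\Big],$$ where the innermost sum runs over $k$-tuples $(l_1,\dots,l_k)$ of positive integers with sum $j$.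
   Context: $(x)_0=1$, $(x)_k=x(x-1)\cdots(x-k+1)$ for $k\ge1$. The power $(1+u)^x$ is understood via the binomial series $\sum_{k\ge0}\binom{x}{k}u^k$ and the defining identity is one of power series in $t$; $x,y$ are variables. For $k=0$ the sum over $(l_1,\dots,l_k)$ equals $1$ if $j=0$ and $0$ otherwise (empty product equal to $1$). $\binom{j}{l_1,\dots,l_k}$ is the multinomial coefficient. *)

theory Defs
  imports "HOL-Probability.Probability" "HOL-Computational_Algebra.Formal_Power_Series"
begin

definition falling_fact :: "real \<Rightarrow> nat \<Rightarrow> real" where
  "falling_fact x k = (\<Prod>i<k. x - real i)"

definition multinom :: "nat \<Rightarrow> nat \<Rightarrow> (nat \<Rightarrow> nat) \<Rightarrow> nat" where
  "multinom j k l = fact j div (\<Prod>p\<in>{1..k}. fact (l p))"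

text \<open>k-tuples (l_1,...,l_k) of positive integers with sum j, encoded as
  functions nat => nat vanishing outside {1..k}.\<close>
definition pos_comps :: "nat \<Rightarrow> nat \<Rightarrow> (nat \<Rightarrow> nat) set" where
  "pos_comps k j = {l. (\<forall>p\<in>{1..k}. 1 \<le> l p) \<and> (\<forall>p. p \<notin> {1..k} \<longrightarrow> l p = 0)
                        \<and> (\<Sum>p\<in>{1..k}. l p) = j}"

text \<open>Moment generating function E[e^{tY}] as a power series in t:
  its Taylor series at 0 is sum_n E[Y^n] t^n / n!.\<close>
definition mgf_fps :: "'a measure \<Rightarrow> ('a \<Rightarrow> real) \<Rightarrow> real fps" where
  "mgf_fps M Y = Abs_fps (\<lambda>n. (\<integral>\<omega>. Y \<omega> ^ n \<partial>M) / fact n)"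

text \<open>Generating series (1 + y (E[e^{Yt}] - 1))^x e^{rt}, where (1+u)^x is the
  binomial series composed with u (u has zero constant term).\<close>
definition phi_gen :: "'a measure \<Rightarrow> ('a \<Rightarrow> real) \<Rightarrow> nat \<Rightarrow> real \<Rightarrow> real \<Rightarrow> real fps" where
  "phi_gen M Y r x y =
     (fps_binomial x oo (fps_const y * (mgf_fps M Y - 1))) * fps_exp (real r)"

definition phi :: "'a measure \<Rightarrow> ('a \<Rightarrow> real) \<Rightarrow> nat \<Rightarrow> nat \<Rightarrow> real \<Rightarrow> real \<Rightarrow> real" where
  "phi M Y n r x y = fact n * fps_nth (phi_gen M Y r x y) n"

end

theory Submission
  imports Defs
begin

(*
  Let A_x = (1 + y (F - 1))^x, where F(t) = E[e^(tY)], so that the generating series is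
  A_x(t) e^(rt). Differentiating m times, the Leibniz rule for the factor e^(rt) and Faa di
  Bruno's formula for A_x give

    D^m (A_x e^(rt)) = sum_k (x choose k) y^k A_(x-k) e^(rt) sum_j (m choose j) r^(m-j) B_(k,j),

  where B_(k,j) = j! [s^j] (F(t + s) - F(t))^k. Faa di Bruno's formula is proved by induction
  on the order of the derivative, using that d/dt of F(t + s) - F(t) equals its d/ds minus F'(t).
  Taking the n-th coefficient by the Leibniz rule, A_(x-k) e^(rt) contributes phi_(i,r)(x - k, y),
  and the coefficients of B_(k,j) are sums of products of derivatives of F, i.e. of moments of Y,
  which by the multinomial theorem and independence are the mixed moments
  E[S_k^(n-i) prod_p Y_p^(l_p)].
*)

unbundle no vec_syntax
unbundle fps_syntax

section \<open>Compositions and the multinomial theorem\<close>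

definition weak_comps :: "'b set \<Rightarrow> nat \<Rightarrow> ('b \<Rightarrow> nat) set" where
  "weak_comps P a = {e. (\<forall>p. p \<notin> P \<longrightarrow> e p = 0) \<and> sum e P = a}"

lemma weak_comps_eq_count_image:
  assumes "finite P"
  shows "weak_comps P a = count ` multisets_of_size P a"
proof (intro equalityI subsetI)
  fix e assume "e \<in> weak_comps P a"
  then have supp: "\<And>p. p \<notin> P \<Longrightarrow> e p = 0" and sum_e: "sum e P = a"
    by (auto simp: weak_comps_def)
  have "finite {p. 0 < e p}"
    using assms supp by (metis (mono_tags) mem_Collect_eq not_less0 rev_finite_subset subsetI)
  then have count_X: "count (Abs_multiset e) = e"
    by (rule count_Abs_multiset)
  have set_X: "set_mset (Abs_multiset e) \<subseteq> P"
    using supp by (metis count_X count_eq_zero_iff subsetI)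
  have "size (Abs_multiset e) = sum e P"
    unfolding size_multiset_overloaded_eq count_X
    using assms set_X by (intro sum.mono_neutral_left) (auto simp flip: count_eq_zero_iff simp: count_X)
  then show "e \<in> count ` multisets_of_size P a"
    using count_X set_X sum_e by (intro rev_image_eqI[of "Abs_multiset e"]) (auto simp: multisets_of_size_def)
next
  fix e assume "e \<in> count ` multisets_of_size P a"
  then obtain X where X: "set_mset X \<subseteq> P" "size X = a" and e: "e = count X"
    by (auto simp: multisets_of_size_def)
  have "sum (count X) P = size X"
    unfolding size_multiset_overloaded_eq
    using X assms by (intro sum.mono_neutral_right) (auto simp: count_eq_zero_iff)
  then show "e \<in> weak_comps P a"
    using X e by (auto simp: weak_comps_def count_eq_zero_iff)
qed

lemma finite_weak_comps: "finite P \<Longrightarrow> finite (weak_comps P a)"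
  by (simp add: weak_comps_eq_count_image finite_multisets_of_size)

lemma fps_prod_nth_weak_comps:
  fixes F :: "'b \<Rightarrow> 'a::comm_ring_1 fps"
  assumes "finite P"
  shows "(\<Prod>p\<in>P. F p) $ a = (\<Sum>e\<in>weak_comps P a. \<Prod>p\<in>P. F p $ e p)"
proof -
  have "inj_on count (multisets_of_size P a)"
    by (rule inj_onI) (simp add: multiset_eq_iff)
  then show ?thesis
    using assms by (simp add: fps_prod_nth' weak_comps_eq_count_image sum.reindex)
qed

lemma fps_exp_sum:
  fixes z :: "'b \<Rightarrow> 'a::field_char_0"
  assumes "finite P"
  shows "fps_exp (\<Sum>p\<in>P. z p) = (\<Prod>p\<in>P. fps_exp (z p))"
  using assms by (induction rule: finite_induct) (simp_all add: fps_exp_add_mult)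

lemma power_sum_multinomial:
  fixes z :: "'b \<Rightarrow> 'a::field_char_0"
  assumes "finite P"
  shows "(\<Sum>p\<in>P. z p) ^ a = fact a * (\<Sum>e\<in>weak_comps P a. \<Prod>p\<in>P. z p ^ e p / fact (e p))"
proof -
  have "(\<Sum>p\<in>P. z p) ^ a / fact a = fps_exp (\<Sum>p\<in>P. z p) $ a" by simp
  also have "\<dots> = (\<Sum>e\<in>weak_comps P a. \<Prod>p\<in>P. z p ^ e p / fact (e p))"
    unfolding fps_exp_sum[OF assms] fps_prod_nth_weak_comps[OF assms] by simp
  finally show ?thesis by (simp add: field_simps)
qed

lemma prod_fact_dvd_fact_sum:
  assumes "finite P"
  shows "(\<Prod>p\<in>P. fact (e p) :: nat) dvd fact (sum e P)"
  using assms
proof (induction rule: finite_induct)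
  case empty then show ?case by simp
next
  case (insert q P)
  have "fact (e q) * (\<Prod>p\<in>P. fact (e p)) dvd (fact (e q) * fact (sum e P) :: nat)"
    using insert.IH by (auto intro: mult_dvd_mono)
  also have "\<dots> dvd fact (e q + sum e P)" by (rule fact_fact_dvd_fact)
  finally show ?case using insert by simp
qed

lemma pos_comps_subset_weak_comps: "pos_comps k j \<subseteq> weak_comps {1..k} j"
  unfolding pos_comps_def weak_comps_def by auto

lemma of_nat_multinom:
  assumes "l \<in> pos_comps k j"
  shows "of_nat (multinom j k l) = (fact j / (\<Prod>p\<in>{1..k}. fact (l p)) :: 'a::field_char_0)"
proof -
  have "sum l {1..k} = j" using assms by (simp add: pos_comps_def)
  then have "fact j mod (\<Prod>p\<in>{1..k}. fact (l p) :: nat) = 0"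
    using prod_fact_dvd_fact_sum[of "{1..k}" l] by simp
  then show ?thesis
    unfolding multinom_def field_char_0_class.of_nat_div by (simp add: of_nat_prod)
qed

section \<open>Derivatives of formal power series\<close>

lemma fps_const_prod: "fps_const (\<Prod>p\<in>A. f p) = (\<Prod>p\<in>A. fps_const (f p) :: 'a::comm_ring_1 fps)"
  by (induction A rule: infinite_finite_induct) (simp_all flip: fps_const_mult)

lemma fps_nth_deriv_nth:
  fixes F :: "'a::field_char_0 fps"
  shows "fps_nth_deriv m F $ n = fact (n + m) / fact n * F $ (n + m)"
proof (induction m arbitrary: F n)
  case 0
  then show ?case by simp
next
  case (Suc m)
  have "fps_nth_deriv (Suc m) F $ n = fps_nth_deriv m (fps_deriv F) $ n" by simp
  also have "\<dots> = fact (n + m) / fact n * (of_nat (n + m + 1) * F $ (n + m + 1))"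
    by (simp only: Suc fps_deriv_nth)
  also have "\<dots> = fact (n + Suc m) / fact n * F $ (n + Suc m)"
    by (simp add: field_simps)
  finally show ?case .
qed

lemma fact_fps_mult_nth:
  fixes F G :: "'a::field_char_0 fps"
  shows "fact n * (F * G) $ n =
    (\<Sum>i=0..n. of_nat (n choose i) * (fact i * F $ i) * (fact (n - i) * G $ (n - i)))"
  unfolding fps_mult_nth sum_distrib_left
  by (intro sum.cong refl) (simp add: binomial_fact field_simps)

lemma fact_fps_sum_mult_nth:
  fixes F H :: "'b \<Rightarrow> 'a::field_char_0 fps"
  shows "fact n * (\<Sum>k\<in>K. fps_const (w k) * (F k * H k)) $ n =
    (\<Sum>k\<in>K. \<Sum>i=0..n. of_nat (n choose i) * (fact i * F k $ i) * w k * (fact (n - i) * H k $ (n - i)))"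
  unfolding fps_sum_nth sum_distrib_left[of "fact n"]
proof (intro sum.cong refl)
  fix k
  have "fact n * (fps_const (w k) * (F k * H k)) $ n = w k * (fact n * (F k * H k) $ n)"
    by simp
  then show "fact n * (fps_const (w k) * (F k * H k)) $ n =
    (\<Sum>i=0..n. of_nat (n choose i) * (fact i * F k $ i) * w k * (fact (n - i) * H k $ (n - i)))"
    by (simp add: fact_fps_mult_nth sum_distrib_left mult_ac)
qed

lemma fps_nth_deriv_mult_exp:
  fixes F :: "'a::field_char_0 fps"
  shows "fps_nth_deriv m (F * fps_exp c) =
    (\<Sum>j\<le>m. fps_const (of_nat (m choose j) * c ^ (m - j)) * fps_nth_deriv j F) * fps_exp c"
proof (induction m)
  case 0
  then show ?case by simp
next
  case (Suc m)
  let ?S = "\<lambda>m. (\<Sum>j\<le>m. fps_const (of_nat (m choose j) * c ^ (m - j)) * fps_nth_deriv j F)"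
  have deriv_S: "fps_deriv (?S m) =
      (\<Sum>j\<le>m. fps_const (of_nat (m choose j) * c ^ (m - j)) * fps_nth_deriv (Suc j) F)"
    by (simp add: fps_deriv_sum fps_nth_deriv_commute del: fps_nth_deriv.simps)
  have c_S: "fps_const c * ?S m = fps_const (c ^ Suc m) * F +
      (\<Sum>j\<le>m. fps_const (of_nat (m choose Suc j) * c ^ (m - j)) * fps_nth_deriv (Suc j) F)"
  proof -
    have "fps_const c * ?S m =
        (\<Sum>j\<le>m. fps_const (of_nat (m choose j) * c ^ (Suc m - j)) * fps_nth_deriv j F)"
      unfolding sum_distrib_left by (intro sum.cong refl) (simp add: Suc_diff_le mult_ac)
    also have "\<dots> =
        (\<Sum>j\<le>Suc m. fps_const (of_nat (m choose j) * c ^ (Suc m - j)) * fps_nth_deriv j F)"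
      by simp
    finally show ?thesis
      unfolding sum.atMost_Suc_shift by simp
  qed
  have S_Suc: "?S (Suc m) = fps_const (c ^ Suc m) * F +
      (\<Sum>j\<le>m. fps_const (of_nat (m choose j) * c ^ (m - j)) * fps_nth_deriv (Suc j) F) +
      (\<Sum>j\<le>m. fps_const (of_nat (m choose Suc j) * c ^ (m - j)) * fps_nth_deriv (Suc j) F)"
    unfolding sum.atMost_Suc_shift
    by (simp add: sum.distrib distrib_right add.assoc
        del: fps_const_add fps_nth_deriv.simps(2) flip: fps_const_add)
  have "fps_nth_deriv (Suc m) (F * fps_exp c) = fps_deriv (?S m * fps_exp c)"
    using Suc by (simp add: fps_nth_deriv_commute del: fps_nth_deriv.simps)
  also have "\<dots> = (fps_deriv (?S m) + fps_const c * ?S m) * fps_exp c"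
    by (simp only: fps_deriv_mult fps_exp_deriv) (simp add: algebra_simps)
  also have "fps_deriv (?S m) + fps_const c * ?S m = ?S (Suc m)"
    unfolding deriv_S c_S S_Suc by (simp add: algebra_simps)
  finally show ?case .
qed

lemma fps_binomial_deriv_pred: "fps_deriv (fps_binomial c) = fps_const c * fps_binomial (c - 1)"
proof (rule fps_ext)
  fix n
  show "fps_deriv (fps_binomial c) $ n = (fps_const c * fps_binomial (c - 1)) $ n"
    using gbinomial_absorption[of n c] by (simp del: of_nat_Suc)
qed

section \<open>The Taylor increment and Bell coefficients\<close>

text \<open>The series \<open>taylor_incr F\<close> is the increment \<open>F(t + s) - F(t)\<close>, expanded in powers
  of \<open>s\<close> with coefficients that are series in \<open>t\<close>; \<open>coeffwise_deriv\<close> is \<open>\<partial>/\<partial>t\<close>.\<close>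

definition taylor_incr :: "'a::field_char_0 fps \<Rightarrow> 'a fps fps" where
  "taylor_incr F = Abs_fps (\<lambda>l. if l = 0 then 0 else fps_const (1 / fact l) * fps_nth_deriv l F)"

definition coeffwise_deriv :: "'a::field_char_0 fps fps \<Rightarrow> 'a fps fps" where
  "coeffwise_deriv G = Abs_fps (\<lambda>n. fps_deriv (G $ n))"

lemma coeffwise_deriv_nth [simp]: "coeffwise_deriv G $ n = fps_deriv (G $ n)"
  by (simp add: coeffwise_deriv_def)

lemma taylor_incr_nth:
  "taylor_incr F $ l = (if l = 0 then 0 else fps_const (1 / fact l) * fps_nth_deriv l F)"
  by (simp add: taylor_incr_def)

lemma coeffwise_deriv_mult:
  "coeffwise_deriv (G * H) = coeffwise_deriv G * H + G * coeffwise_deriv H"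
  by (rule fps_ext) (simp add: fps_mult_nth fps_deriv_sum sum.distrib)

lemma coeffwise_deriv_power:
  "coeffwise_deriv (G ^ Suc k) = of_nat (Suc k) * G ^ k * coeffwise_deriv G"
proof (induction k)
  case 0
  then show ?case by simp
next
  case (Suc k)
  have "coeffwise_deriv (G ^ Suc (Suc k)) =
      coeffwise_deriv G * G ^ Suc k + G * (of_nat (Suc k) * G ^ k * coeffwise_deriv G)"
    by (simp only: power_Suc[of G "Suc k"] coeffwise_deriv_mult Suc)
  also have "\<dots> = of_nat (Suc (Suc k)) * G ^ Suc k * coeffwise_deriv G"
    by (simp add: algebra_simps)
  finally show ?case .
qed

lemma coeffwise_deriv_taylor_incr:
  "coeffwise_deriv (taylor_incr F) = fps_deriv (taylor_incr F) - fps_const (fps_deriv F)"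
proof (rule fps_ext)
  fix n
  show "coeffwise_deriv (taylor_incr F) $ n = (fps_deriv (taylor_incr F) - fps_const (fps_deriv F)) $ n"
  proof (cases n)
    case 0
    then show ?thesis by (simp add: taylor_incr_nth)
  next
    case (Suc n')
    have "coeffwise_deriv (taylor_incr F) $ n = fps_const (1 / fact n) * fps_nth_deriv (Suc n) F"
      using Suc by (simp add: taylor_incr_nth fps_nth_deriv_commute del: fps_nth_deriv.simps)
    also have "\<dots> = fps_const (of_nat (Suc n)) * fps_const (1 / fact (Suc n)) * fps_nth_deriv (Suc n) F"
      by (simp add: field_simps del: of_nat_Suc)
    also have "\<dots> = (fps_deriv (taylor_incr F) - fps_const (fps_deriv F)) $ n"
      using Suc by (simp add: taylor_incr_nth fps_of_nat del: of_nat_Suc fps_nth_deriv.simps fps_const_mult)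
    finally show ?thesis .
  qed
qed

lemma taylor_incr_power_nth_deriv:
  "fps_deriv ((taylor_incr F ^ Suc k) $ j) =
     of_nat (Suc j) * (taylor_incr F ^ Suc k) $ Suc j
     - of_nat (Suc k) * fps_deriv F * (taylor_incr F ^ k) $ j"
proof -
  let ?G = "taylor_incr F"
  have "coeffwise_deriv (?G ^ Suc k) = of_nat (Suc k) * ?G ^ k * (fps_deriv ?G - fps_const (fps_deriv F))"
    unfolding coeffwise_deriv_power coeffwise_deriv_taylor_incr ..
  also have "\<dots> = fps_deriv (?G ^ Suc k) - fps_const (of_nat (Suc k) * fps_deriv F) * ?G ^ k"
  proof -
    have "fps_deriv (?G ^ Suc k) = of_nat (Suc k) * fps_deriv ?G * ?G ^ k"
      using fps_deriv_power'[of ?G "Suc k"] by simp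
    then show ?thesis
      unfolding fps_const_mult[symmetric] fps_of_nat
      by (simp add: algebra_simps fps_of_nat del: fps_const_mult)
  qed
  finally have "coeffwise_deriv (?G ^ Suc k) $ j =
      (fps_deriv (?G ^ Suc k) - fps_const (of_nat (Suc k) * fps_deriv F) * ?G ^ k) $ j"
    by simp
  then show ?thesis
    by (simp only: coeffwise_deriv_nth fps_sub_nth fps_deriv_nth fps_mult_left_const_nth
        Suc_eq_plus1 mult.assoc)
qed

lemma taylor_incr_power_nth_eq_0: "j < k \<Longrightarrow> (taylor_incr F ^ k) $ j = 0"
proof (induction k arbitrary: j)
  case 0
  then show ?case by simp
next
  case (Suc k)
  have "taylor_incr F $ i * (taylor_incr F ^ k) $ (j - i) = 0" if "i \<le> j" for i
    using Suc.IH[of "j - i"] Suc.prems that by (cases "i = 0") (auto simp: taylor_incr_nth)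
  then show ?case
    by (auto simp: fps_mult_nth intro!: sum.neutral)
qed

lemma taylor_incr_power_nth_0: "(taylor_incr F ^ k) $ 0 = (if k = 0 then 1 else 0)"
  by (cases k) (simp_all add: taylor_incr_power_nth_eq_0 taylor_incr_nth)

text \<open>\<open>bell_coeff F k j\<close> is \<open>j! [s\<^sup>j] (F(t + s) - F(t))\<^sup>k\<close>, that is \<open>k!\<close> times the partial
  Bell polynomial \<open>B\<^sub>j\<^sub>,\<^sub>k(F', F'', \<dots>)\<close>.\<close>

definition bell_coeff :: "'a::field_char_0 fps \<Rightarrow> nat \<Rightarrow> nat \<Rightarrow> 'a fps" where
  "bell_coeff F k j = fps_const (fact j) * (taylor_incr F ^ k) $ j"

lemma bell_coeff_eq_0: "j < k \<Longrightarrow> bell_coeff F k j = 0"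
  by (simp add: bell_coeff_def taylor_incr_power_nth_eq_0)

lemma fps_deriv_bell_coeff:
  "fps_deriv (bell_coeff F k j) =
     bell_coeff F k (Suc j) - fps_const (of_nat k) * fps_deriv F * bell_coeff F (k - 1) j"
proof (cases k)
  case 0
  then show ?thesis by (simp add: bell_coeff_def)
next
  case (Suc k')
  have "fps_deriv (bell_coeff F k j) =
      fps_const (fact j) * (of_nat (Suc j) * (taylor_incr F ^ Suc k') $ Suc j
      - of_nat (Suc k') * fps_deriv F * (taylor_incr F ^ k') $ j)"
    using Suc by (simp only: bell_coeff_def fps_deriv_mult_const_left taylor_incr_power_nth_deriv)
  then show ?thesis
    using Suc unfolding bell_coeff_def
    by (simp add: algebra_simps fps_of_nat[symmetric] del: of_nat_Suc)
qed

lemma bell_coeff_expand: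
  "bell_coeff F k j = (\<Sum>l\<in>pos_comps k j.
     fps_const (of_nat (multinom j k l)) * (\<Prod>p\<in>{1..k}. fps_nth_deriv (l p) F))"
proof -
  have "(taylor_incr F ^ k) $ j = (\<Sum>e\<in>weak_comps {1..k} j. \<Prod>p\<in>{1..k}. taylor_incr F $ e p)"
    by (simp flip: fps_prod_nth_weak_comps)
  also have "\<dots> = (\<Sum>l\<in>pos_comps k j. \<Prod>p\<in>{1..k}. taylor_incr F $ l p)"
  proof (rule sum.mono_neutral_right[OF finite_weak_comps pos_comps_subset_weak_comps])
    show "\<forall>e\<in>weak_comps {1..k} j - pos_comps k j. (\<Prod>p\<in>{1..k}. taylor_incr F $ e p) = 0"
      by (force simp: weak_comps_def pos_comps_def taylor_incr_nth)
  qed simp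
  also have "\<dots> = (\<Sum>l\<in>pos_comps k j.
      fps_const (\<Prod>p\<in>{1..k}. 1 / fact (l p)) * (\<Prod>p\<in>{1..k}. fps_nth_deriv (l p) F))"
  proof (intro sum.cong refl)
    fix l assume "l \<in> pos_comps k j"
    then have "taylor_incr F $ l p = fps_const (1 / fact (l p)) * fps_nth_deriv (l p) F"
      if "p \<in> {1..k}" for p
      using that by (force simp: pos_comps_def taylor_incr_nth)
    then show "(\<Prod>p\<in>{1..k}. taylor_incr F $ l p) =
        fps_const (\<Prod>p\<in>{1..k}. 1 / fact (l p)) * (\<Prod>p\<in>{1..k}. fps_nth_deriv (l p) F)"
      by (simp add: fps_const_prod flip: prod.distrib)
  qed
  finally have power_nth: "(taylor_incr F ^ k) $ j = \<dots>" .
  show ?thesis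
    unfolding bell_coeff_def power_nth sum_distrib_left
  proof (intro sum.cong refl)
    fix l assume "l \<in> pos_comps k j"
    then show "fps_const (fact j) * (fps_const (\<Prod>p\<in>{1..k}. 1 / fact (l p)) *
        (\<Prod>p\<in>{1..k}. fps_nth_deriv (l p) F)) =
      fps_const (of_nat (multinom j k l)) * (\<Prod>p\<in>{1..k}. fps_nth_deriv (l p) F)"
      by (simp add: of_nat_multinom prod_dividef mult.assoc[symmetric])
  qed
qed

section \<open>Derivatives of \<open>(1 + y (F - 1))\<^sup>x\<close>\<close>

definition binom_comp :: "'a::field_char_0 fps \<Rightarrow> 'a \<Rightarrow> 'a \<Rightarrow> 'a fps" where
  "binom_comp F x y = fps_binomial x oo (fps_const y * (F - 1))"

lemma fps_deriv_binom_comp: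
  assumes "F $ 0 = 1"
  shows "fps_deriv (binom_comp F x y) = fps_const (x * y) * binom_comp F (x - 1) y * fps_deriv F"
proof -
  let ?U = "fps_const y * (F - 1)"
  have "?U $ 0 = 0" using assms by simp
  then have "fps_deriv (binom_comp F x y) = (fps_deriv (fps_binomial x) oo ?U) * fps_deriv ?U"
    unfolding binom_comp_def by (rule fps_compose_deriv)
  also have "fps_deriv (fps_binomial x) oo ?U = fps_const x * binom_comp F (x - 1) y"
    unfolding fps_binomial_deriv_pred binom_comp_def fps_const_mult_apply_left[symmetric] ..
  finally show ?thesis by (simp add: algebra_simps)
qed

text \<open>Faa di Bruno's formula for \<open>(1 + y (F - 1))\<^sup>x\<close>; any bound \<open>N \<ge> j\<close> may be used since
  the terms with \<open>k > j\<close> vanish.\<close>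

lemma fps_nth_deriv_binom_comp:
  assumes F0: "F $ 0 = 1"
  shows "j \<le> N \<Longrightarrow> fps_nth_deriv j (binom_comp F x y) =
    (\<Sum>k\<le>N. fps_const ((x gchoose k) * y ^ k) * binom_comp F (x - of_nat k) y * bell_coeff F k j)"
proof (induction j arbitrary: N)
  case 0
  have "(\<Sum>k\<le>N. fps_const ((x gchoose k) * y ^ k) * binom_comp F (x - of_nat k) y * bell_coeff F k 0) =
        (\<Sum>k\<le>N. if k = 0 then binom_comp F x y else 0)"
    by (intro sum.cong) (auto simp: bell_coeff_def taylor_incr_power_nth_0)
  then show ?case by simp
next
  case (Suc j)
  then obtain N' where N: "N = Suc N'" by (cases N) auto
  let ?A = "\<lambda>k. binom_comp F (x - of_nat k) y" and ?R = "bell_coeff F" and ?D = "fps_deriv F"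
  define c where "c k = (x gchoose k) * y ^ k" for k
  have c_Suc: "c (Suc k) * of_nat (Suc k) = c k * ((x - of_nat k) * y)" for k
  proof -
    have "of_nat (Suc k) * (x gchoose Suc k) = (x - of_nat k) * (x gchoose k)"
      by (simp only: gbinomial_absorption gbinomial_absorb_comp)
    then show ?thesis
      by (simp add: c_def mult_ac)
  qed
  have "fps_nth_deriv (Suc j) (binom_comp F x y) =
      fps_deriv (\<Sum>k\<le>N. fps_const (c k) * ?A k * ?R k j)"
    using Suc.IH[of N] Suc.prems by (simp add: c_def fps_nth_deriv_commute del: fps_nth_deriv.simps)
  also have "\<dots> = (\<Sum>k\<le>N. fps_const (c k) * fps_const ((x - of_nat k) * y) * ?A (Suc k) * ?D * ?R k j)
      + (\<Sum>k\<le>N. fps_const (c k) * ?A k * ?R k (Suc j))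
      - (\<Sum>k\<le>N. fps_const (c k) * fps_const (of_nat k) * ?A k * ?D * ?R (k - 1) j)"
  proof -
    have pred: "x - of_nat k - 1 = x - of_nat (Suc k)" for k by simp
    have "fps_deriv (fps_const (c k) * ?A k * ?R k j) =
       fps_const (c k) * fps_const ((x - of_nat k) * y) * ?A (Suc k) * ?D * ?R k j
      + fps_const (c k) * ?A k * ?R k (Suc j)
      - fps_const (c k) * fps_const (of_nat k) * ?A k * ?D * ?R (k - 1) j" for k
      by (simp only: fps_deriv_mult fps_deriv_const fps_deriv_binom_comp[OF F0] fps_deriv_bell_coeff
          pred) algebra
    then show ?thesis by (simp only: fps_deriv_sum sum.distrib sum_subtractf)
  qed
  \<comment> \<open>after shifting \<open>k\<close> by one, the third sum cancels the first\<close>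
  also have "(\<Sum>k\<le>N. fps_const (c k) * fps_const (of_nat k) * ?A k * ?D * ?R (k - 1) j)
      = (\<Sum>k\<le>N'. fps_const (c (Suc k)) * fps_const (of_nat (Suc k)) * ?A (Suc k) * ?D * ?R k j)"
    unfolding N sum.atMost_Suc_shift by simp
  also have "\<dots> = (\<Sum>k\<le>N'. fps_const (c k) * fps_const ((x - of_nat k) * y) * ?A (Suc k) * ?D * ?R k j)"
    by (intro sum.cong refl) (simp only: c_Suc fps_const_mult)
  also have "\<dots> = (\<Sum>k\<le>N. fps_const (c k) * fps_const ((x - of_nat k) * y) * ?A (Suc k) * ?D * ?R k j)"
    using Suc.prems unfolding N by (simp add: bell_coeff_eq_0)
  finally show ?case by (simp add: c_def)
qed

lemma fps_nth_deriv_binom_comp_mult_exp: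
  assumes "F $ 0 = 1"
  shows "fps_nth_deriv m (binom_comp F x y * fps_exp c) =
    (\<Sum>k\<le>m. fps_const ((x gchoose k) * y ^ k) * (binom_comp F (x - of_nat k) y * fps_exp c *
      (\<Sum>j=k..m. fps_const (of_nat (m choose j) * c ^ (m - j)) * bell_coeff F k j)))"
proof -
  let ?A = "\<lambda>k. binom_comp F (x - of_nat k) y" and ?c = "\<lambda>k. (x gchoose k) * y ^ k"
    and ?b = "\<lambda>j. of_nat (m choose j) * c ^ (m - j)"
  have "fps_nth_deriv m (binom_comp F x y * fps_exp c) =
      (\<Sum>j\<le>m. fps_const (?b j) * (\<Sum>k\<le>m. fps_const (?c k) * ?A k * bell_coeff F k j)) * fps_exp c"
    unfolding fps_nth_deriv_mult_exp by (simp add: fps_nth_deriv_binom_comp[OF assms])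
  also have "\<dots> = (\<Sum>j\<le>m. \<Sum>k\<le>m. fps_const (?c k) * (?A k * fps_exp c *
      (fps_const (?b j) * bell_coeff F k j)))"
    by (simp add: sum_distrib_left sum_distrib_right mult_ac)
  also have "\<dots> = (\<Sum>k\<le>m. fps_const (?c k) * (?A k * fps_exp c *
      (\<Sum>j\<le>m. fps_const (?b j) * bell_coeff F k j)))"
    by (subst sum.swap) (simp add: sum_distrib_left)
  also have "\<dots> = (\<Sum>k\<le>m. fps_const (?c k) * (?A k * fps_exp c *
      (\<Sum>j=k..m. fps_const (?b j) * bell_coeff F k j)))"
    by (intro sum.cong refl arg_cong2[where f = "(*)"] sum.mono_neutral_right)
      (auto simp: bell_coeff_eq_0)
  finally show ?thesis .
qed

section \<open>Moments of independent copies\<close>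

lemma mgf_fps_nth_0: "prob_space M \<Longrightarrow> mgf_fps M Y $ 0 = 1"
  by (simp add: mgf_fps_def prob_space.prob_space)

lemma fps_nth_deriv_mgf_fps_nth:
  "fps_nth_deriv q (mgf_fps M Y) $ e = (\<integral>\<omega>. Y \<omega> ^ (e + q) \<partial>M) / fact e"
  by (simp add: fps_nth_deriv_nth mgf_fps_def)

lemma power_div_fact_le_exp:
  fixes z :: real
  assumes "0 \<le> z"
  shows "z ^ q / fact q \<le> exp z"
proof -
  have "(\<Sum>n\<in>{q}. inverse (fact n) * z ^ n) \<le> (\<Sum>n. inverse (fact n) * z ^ n)"
    using assms by (intro sum_le_suminf[OF summable_exp]) auto
  then show ?thesis by (simp add: exp_def field_simps)
qed

lemma integrable_power_if_exp_integrable: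
  fixes Y :: "'a \<Rightarrow> real"
  assumes Y: "Y \<in> borel_measurable M" and "t > 0"
    and "integrable M (\<lambda>\<omega>. exp (t * Y \<omega>))" "integrable M (\<lambda>\<omega>. exp (- t * Y \<omega>))"
  shows "integrable M (\<lambda>\<omega>. Y \<omega> ^ q)"
proof (rule Bochner_Integration.integrable_bound)
  let ?f = "\<lambda>\<omega>. fact q / t ^ q * (exp (t * Y \<omega>) + exp (- t * Y \<omega>))"
  show "integrable M ?f" using assms by auto
  show "(\<lambda>\<omega>. Y \<omega> ^ q) \<in> borel_measurable M" using Y by measurable
  show "AE \<omega> in M. norm (Y \<omega> ^ q) \<le> norm (?f \<omega>)"
  proof (intro AE_I2)
    fix \<omega>
    have "(t * \<bar>Y \<omega>\<bar>) ^ q / fact q \<le> exp (t * \<bar>Y \<omega>\<bar>)"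
      using \<open>t > 0\<close> by (intro power_div_fact_le_exp) simp
    also have "\<dots> \<le> exp (t * Y \<omega>) + exp (- t * Y \<omega>)"
      by (cases "Y \<omega> \<ge> 0") (auto simp: add_increasing add_increasing2)
    finally have "\<bar>Y \<omega>\<bar> ^ q \<le> ?f \<omega>"
      using \<open>t > 0\<close> by (simp add: field_simps power_mult_distrib)
    then show "norm (Y \<omega> ^ q) \<le> norm (?f \<omega>)"
      using \<open>t > 0\<close> by (simp add: power_abs)
  qed
qed

lemma
  fixes X Y :: "'a \<Rightarrow> real" and f :: "real \<Rightarrow> real"
  assumes X: "X \<in> borel_measurable M" and Y: "Y \<in> borel_measurable M"
    and distr_eq: "distr M borel X = distr M borel Y" and f: "f \<in> borel_measurable borel"
  shows integrable_comp_eq_if_distr_eq: "integrable M (\<lambda>\<omega>. f (X \<omega>)) \<longleftrightarrow> integrable M (\<lambda>\<omega>. f (Y \<omega>))"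
    and integral_comp_eq_if_distr_eq: "(\<integral>\<omega>. f (X \<omega>) \<partial>M) = (\<integral>\<omega>. f (Y \<omega>) \<partial>M)"
  using integrable_distr_eq[OF X f] integrable_distr_eq[OF Y f]
    integral_distr[OF X f] integral_distr[OF Y f] distr_eq by simp_all

locale iid_copies_with_mgf = prob_space M for M :: "'a measure" +
  fixes Y :: "'a \<Rightarrow> real" and Ys :: "nat \<Rightarrow> 'a \<Rightarrow> real"
  assumes Y_measurable: "Y \<in> borel_measurable M"
    and mgf_exists: "\<exists>r0>0. \<forall>t. \<bar>t\<bar> < r0 \<longrightarrow> integrable M (\<lambda>\<omega>. exp (t * Y \<omega>))"
    and Ys_measurable: "\<And>j. j \<ge> 1 \<Longrightarrow> Ys j \<in> borel_measurable M"
    and Ys_indep: "indep_vars (\<lambda>_. borel) Ys {1..}"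
    and Ys_distr: "\<And>j. j \<ge> 1 \<Longrightarrow> distr M borel (Ys j) = distr M borel Y"
begin

lemma integrable_Y_power: "integrable M (\<lambda>\<omega>. Y \<omega> ^ q)"
proof -
  obtain r0 where "r0 > 0" and r0: "\<And>t. \<bar>t\<bar> < r0 \<Longrightarrow> integrable M (\<lambda>\<omega>. exp (t * Y \<omega>))"
    using mgf_exists by auto
  then show ?thesis
    by (intro integrable_power_if_exp_integrable[OF Y_measurable, of "r0 / 2"] r0) auto
qed

lemma
  assumes "p \<ge> 1"
  shows integrable_Ys_power: "integrable M (\<lambda>\<omega>. Ys p \<omega> ^ q)"
    and integral_Ys_power: "(\<integral>\<omega>. Ys p \<omega> ^ q \<partial>M) = (\<integral>\<omega>. Y \<omega> ^ q \<partial>M)"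
  using integrable_comp_eq_if_distr_eq[OF Ys_measurable Y_measurable Ys_distr, of p "\<lambda>z. z ^ q"]
    integral_comp_eq_if_distr_eq[OF Ys_measurable Y_measurable Ys_distr, of p "\<lambda>z. z ^ q"]
    integrable_Y_power assms by simp_all

text \<open>Expanding \<open>S\<^sub>k\<^sup>a\<close> by the multinomial theorem and factoring the expectation by
  independence, both sides become \<open>a! \<Sum>\<^sub>e \<Prod>\<^sub>p E[Y ^ (e p + l p)] / (e p)!\<close>.\<close>

lemma mixed_moment_eq_mgf_coeff:
  "fact a * (\<Prod>p\<in>{1..k}. fps_nth_deriv (l p) (mgf_fps M Y)) $ a =
    (\<integral>\<omega>. (\<Sum>p=1..k. Ys p \<omega>) ^ a * (\<Prod>p=1..k. Ys p \<omega> ^ l p) \<partial>M)"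
proof -
  let ?\<mu> = "\<lambda>q. (\<integral>\<omega>. Y \<omega> ^ q \<partial>M)"
  let ?C = "weak_comps {1..k} a"
  let ?X = "\<lambda>e p \<omega>. Ys p \<omega> ^ (e p + l p) / fact (e p)"
  have indep: "indep_vars (\<lambda>_. borel) (?X e) {1..k}" for e
    using indep_vars_compose2[OF indep_vars_subset[OF Ys_indep], of "{1..k}"
        "\<lambda>p z. z ^ (e p + l p) / fact (e p)" "\<lambda>_. borel"]
    by auto
  have integrable: "integrable M (?X e p)" and integral: "(\<integral>\<omega>. ?X e p \<omega> \<partial>M) = ?\<mu> (e p + l p) / fact (e p)"
    if "p \<in> {1..k}" for e p
    using integrable_Ys_power integral_Ys_power that by auto
  have "(\<Sum>p=1..k. Ys p \<omega>) ^ a * (\<Prod>p=1..k. Ys p \<omega> ^ l p) =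
      (\<Sum>e\<in>?C. fact a * (\<Prod>p\<in>{1..k}. ?X e p \<omega>))" for \<omega>
    by (simp add: power_sum_multinomial sum_distrib_left sum_distrib_right mult.assoc power_add
        flip: prod.distrib)
  then have "(\<integral>\<omega>. (\<Sum>p=1..k. Ys p \<omega>) ^ a * (\<Prod>p=1..k. Ys p \<omega> ^ l p) \<partial>M) =
      (\<Sum>e\<in>?C. \<integral>\<omega>. fact a * (\<Prod>p\<in>{1..k}. ?X e p \<omega>) \<partial>M)"
    by (simp only:) (rule Bochner_Integration.integral_sum,
        intro integrable_mult_right indep_vars_integrable[OF _ indep] integrable; simp)
  also have "\<dots> = (\<Sum>e\<in>?C. fact a * (\<Prod>p\<in>{1..k}. ?\<mu> (e p + l p) / fact (e p)))"
  proof (intro sum.cong refl)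
    fix e
    have "(\<integral>\<omega>. (\<Prod>p\<in>{1..k}. ?X e p \<omega>) \<partial>M) = (\<Prod>p\<in>{1..k}. \<integral>\<omega>. ?X e p \<omega> \<partial>M)"
      by (rule indep_vars_lebesgue_integral[OF _ indep]) (auto intro: integrable)
    also have "\<dots> = (\<Prod>p\<in>{1..k}. ?\<mu> (e p + l p) / fact (e p))"
      by (intro prod.cong refl integral)
    finally show "(\<integral>\<omega>. fact a * (\<Prod>p\<in>{1..k}. ?X e p \<omega>) \<partial>M) =
        fact a * (\<Prod>p\<in>{1..k}. ?\<mu> (e p + l p) / fact (e p))"
      by simp
  qed
  also have "\<dots> = fact a * (\<Prod>p\<in>{1..k}. fps_nth_deriv (l p) (mgf_fps M Y)) $ a"
    by (simp add: fps_prod_nth_weak_comps fps_nth_deriv_mgf_fps_nth sum_distrib_left)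
  finally show ?thesis ..
qed

lemma fact_bell_coeff_sum_mgf_nth:
  "fact a * (\<Sum>j\<in>J. fps_const (b j) * bell_coeff (mgf_fps M Y) k j) $ a =
    (\<Sum>j\<in>J. \<Sum>l\<in>pos_comps k j. b j * real (multinom j k l) *
      (\<integral>\<omega>. (\<Sum>p=1..k. Ys p \<omega>) ^ a * (\<Prod>p=1..k. Ys p \<omega> ^ l p) \<partial>M))"
  unfolding fps_sum_nth sum_distrib_left
proof (intro sum.cong refl)
  fix j
  let ?P = "\<lambda>l. \<Prod>p\<in>{1..k}. fps_nth_deriv (l p) (mgf_fps M Y)"
  have "fact a * (fps_const (b j) * bell_coeff (mgf_fps M Y) k j) $ a =
      (\<Sum>l\<in>pos_comps k j. b j * real (multinom j k l) * (fact a * ?P l $ a))"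
    by (simp add: bell_coeff_expand fps_sum_nth sum_distrib_left mult_ac)
  then show "fact a * (fps_const (b j) * bell_coeff (mgf_fps M Y) k j) $ a =
      (\<Sum>l\<in>pos_comps k j. b j * real (multinom j k l) *
        (\<integral>\<omega>. (\<Sum>p=1..k. Ys p \<omega>) ^ a * (\<Prod>p=1..k. Ys p \<omega> ^ l p) \<partial>M))"
    by (simp only: mixed_moment_eq_mgf_coeff)
qed

end

section \<open>The coefficients \<open>phi\<close>\<close>

lemma falling_fact_div_fact: "falling_fact x k / fact k = x gchoose k"
proof -
  have "(x gchoose k) * fact k = falling_fact x k"
    unfolding gbinomial_mult_fact' falling_fact_def atLeast0LessThan ..
  then show ?thesis
    by (simp add: field_simps)
qed

lemma phi_gen_eq_binom_comp: "phi_gen M Y r x y = binom_comp (mgf_fps M Y) x y * fps_exp (real r)"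
  by (simp add: phi_gen_def binom_comp_def)

lemma phi_add_eq_nth_deriv: "phi M Y (m + n) r x y = fact n * fps_nth_deriv m (phi_gen M Y r x y) $ n"
  by (simp add: phi_def fps_nth_deriv_nth add.commute)

theorem theorem2p4:
  fixes M :: "'a measure" and Y :: "'a \<Rightarrow> real" and Ys :: "nat \<Rightarrow> 'a \<Rightarrow> real"
    and r :: nat and x y :: real and m n :: nat
  assumes "prob_space M"
    and "Y \<in> borel_measurable M"
    and "\<exists>r0>0. \<forall>t. \<bar>t\<bar> < r0 \<longrightarrow> integrable M (\<lambda>\<omega>. exp (t * Y \<omega>))"
    and "\<And>j. j \<ge> 1 \<Longrightarrow> Ys j \<in> borel_measurable M"
    and "prob_space.indep_vars M (\<lambda>_. borel) Ys {1..}"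
    and "\<And>j. j \<ge> 1 \<Longrightarrow> distr M borel (Ys j) = distr M borel Y"
    and "r > 0"
  shows "phi M Y (m + n) r x y =
    (\<Sum>i=0..n. \<Sum>k=0..m.
       real (n choose i) * phi M Y i r (x - real k) y * (falling_fact x k * y ^ k / fact k) *
       (\<Sum>j=k..m. \<Sum>l\<in>pos_comps k j.
          real (m choose j) * real (multinom j k l) * real r ^ (m - j) *
          (\<integral>\<omega>. (\<Sum>p=1..k. Ys p \<omega>) ^ (n - i) * (\<Prod>p=1..k. Ys p \<omega> ^ l p) \<partial>M)))"
proof -
  interpret iid_copies_with_mgf M Y Ys
    by (rule iid_copies_with_mgf.intro[OF assms(1) iid_copies_with_mgf_axioms.intro[OF assms(2-6)]])
  \<comment> \<open>the identity holds for every \<open>r\<close>\<close>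
  let ?G = "\<lambda>k. \<Sum>j=k..m. fps_const (real (m choose j) * real r ^ (m - j)) * bell_coeff (mgf_fps M Y) k j"
  have weight_eq: "(x gchoose k) * y ^ k = falling_fact x k * y ^ k / fact k" for k
    by (simp flip: falling_fact_div_fact)
  have "phi M Y (m + n) r x y = fact n * fps_nth_deriv m (phi_gen M Y r x y) $ n"
    by (rule phi_add_eq_nth_deriv)
  also have "fps_nth_deriv m (phi_gen M Y r x y) =
      (\<Sum>k\<le>m. fps_const ((x gchoose k) * y ^ k) * (phi_gen M Y r (x - real k) y * ?G k))"
    unfolding phi_gen_eq_binom_comp
    by (rule fps_nth_deriv_binom_comp_mult_exp[OF mgf_fps_nth_0[OF assms(1)]])
  also have "fact n * \<dots> $ n = (\<Sum>k\<le>m. \<Sum>i=0..n. real (n choose i) * phi M Y i r (x - real k) y *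
      ((x gchoose k) * y ^ k) * (fact (n - i) * ?G k $ (n - i)))"
    unfolding fact_fps_sum_mult_nth phi_def ..
  also have "\<dots> = (\<Sum>i=0..n. \<Sum>k=0..m.
       real (n choose i) * phi M Y i r (x - real k) y * (falling_fact x k * y ^ k / fact k) *
       (\<Sum>j=k..m. \<Sum>l\<in>pos_comps k j.
          real (m choose j) * real (multinom j k l) * real r ^ (m - j) *
          (\<integral>\<omega>. (\<Sum>p=1..k. Ys p \<omega>) ^ (n - i) * (\<Prod>p=1..k. Ys p \<omega> ^ l p) \<partial>M)))"
    unfolding fact_bell_coeff_sum_mgf_nth weight_eq atMost_atLeast0
    by (subst sum.swap) (simp add: mult_ac)
  finally show ?thesis .
qed

end
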